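(* (1) For every integer $d\ge 1$ there is a constant $r_d>0$ such that for every proper convex domain $D\subset\mathbb{R}^d$ and every $z\in D$, one has $s_D(z)\ge r_d$. (2) If $D\subset\mathbb{R}^d$ is a domain such that $\inf_{z\in D} s_D(z)>0$, then $D$ is convex and proper.
   Context: Let $\mathbb{P}\mathbb{R}^d=(\mathbb{R}^{d+1}\setminus\{0\})/\sim$, where $x\sim y$ iff $x=\lambda y$ for some $\lambda\in\mathbb{R}\setminus\{0\}$, and embed $\mathbb{R}^d$ in it as the points $(1:x_1:\dots:x_d)$. A projective map is a map of $\mathbb{P}\mathbb{R}^d$ induced by a linear map of $\mathbb{R}^{d+1}$; it is identified with its restriction to $\mathbb{R}^d$ (a linear-fractional map). For a domain $D\subset\mathbb{R}^d$ and $z\in D$, the (projective) squeezing function is $s_D(z)=\sup\{r>0:\ \exists$ a projective map $\Phi$ with $\Phi(z)=0$, $\Phi(D)\subset B(0,1)$ and $B(0,r)\subset\Phi(D)\}$, where $B(0,r)$ is the open Euclidean ball; one sets $s_D(z)=0$ if no such $\Phi$ exists. A convex domain is called proper if it contains no affine line. *)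

theory Defs
  imports "HOL-Analysis.Analysis"
begin

text \<open>Homogeneous coordinates: R^{d+1} is modelled as real^('n option), with the
  index None playing the role of the 0-th coordinate, so that x in R^d corresponds
  to (1 : x_1 : ... : x_d).\<close>

definition hom_lift :: "real^'n \<Rightarrow> real^('n::finite option)" where
  "hom_lift x = (\<chi> i. case i of None \<Rightarrow> 1 | Some j \<Rightarrow> x $ j)"

definition proj_apply ::
  "real^('n::finite option)^('n option) \<Rightarrow> real^'n \<Rightarrow> real^'n" where
  "proj_apply M x = (let y = M *v hom_lift x in \<chi> j. y $ Some j / y $ None)"

definition proj_finite_at ::
  "real^('n::finite option)^('n option) \<Rightarrow> real^'n \<Rightarrow> bool" where
  "proj_finite_at M x \<longleftrightarrow> (M *v hom_lift x) $ None \<noteq> 0"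

definition squeeze_radii :: "(real^'n::finite) set \<Rightarrow> real^'n \<Rightarrow> real set" where
  "squeeze_radii D z = {r. r > 0 \<and> (\<exists>M :: real^('n option)^('n option).
      invertible M \<and> (\<forall>x\<in>D. proj_finite_at M x) \<and>
      proj_apply M z = 0 \<and> proj_apply M ` D \<subseteq> ball 0 1 \<and>
      ball 0 r \<subseteq> proj_apply M ` D)}"

definition squeezing :: "(real^'n::finite) set \<Rightarrow> real^'n \<Rightarrow> real" where
  "squeezing D z = (if squeeze_radii D z = {} then 0 else Sup (squeeze_radii D z))"

definition domain :: "(real^'n::finite) set \<Rightarrow> bool" where
  "domain D \<longleftrightarrow> open D \<and> connected D \<and> D \<noteq> {}"

definition contains_line :: "(real^'n::finite) set \<Rightarrow> bool" where
  "contains_line D \<longleftrightarrow> (\<exists>a v. v \<noteq> 0 \<and> (\<forall>t::real. a + t *\<^sub>R v \<in> D))"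

definition proper_convex :: "(real^'n::finite) set \<Rightarrow> bool" where
  "proper_convex D \<longleftrightarrow> convex D \<and> \<not> contains_line D"

end

(*
  (1) Lift D to the open cone C = {c (1, x) | c > 0, x \<in> D} in R^(d+1).  For a
  proper convex domain the closure K of C is a closed pointed convex cone.  Among all ways of
  writing (1, z) as a sum of d + 1 vectors of K choose one of maximal |det| (it exists by
  compactness).  Maximality means that, in the coordinates P w.r.t. these vectors, every w \<in> K
  has all partial sums over d of the d + 1 coordinates nonnegative, while every w with P w \<ge> 0
  lies in K.  So C is squeezed between two fixed simplicial cones, and one fixed projective
  normalisation of P maps D into the unit ball, z to 0, and covers the ball of radius
  1 / (m^2 (m^2 + 1)), m = d + 1.
  (2) A projective map sending a domain that contains a line into a bounded set must be
  degenerate.  If D is not convex, some point q of the interior of its convex hull lies on the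
  boundary of D.  For z \<in> D close to q, every map admissible at z moves the segment [z, q] very
  little, so the image of q falls into the inner ball, and injectivity puts q into D.
*)

theory Submission
  imports Defs "HOL-Library.Cardinality"
begin

section \<open>Homogeneous coordinates and projective maps\<close>

definition hom_tail :: "real^('n::finite option) \<Rightarrow> real^'n" where
  "hom_tail w = (\<chi> j. w $ Some j)"

lemma hom_lift_None [simp]: "hom_lift x $ None = 1"
  and hom_lift_Some [simp]: "hom_lift x $ Some j = x $ j"
  by (simp_all add: hom_lift_def)

lemma hom_tail_nth [simp]: "hom_tail w $ j = w $ Some j"
  by (simp add: hom_tail_def)

lemma hom_tail_hom_lift [simp]: "hom_tail (hom_lift x) = x"
  by (simp add: vec_eq_iff)

lemma hom_tail_add [simp]: "hom_tail (u + v) = hom_tail u + hom_tail v"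
  and hom_tail_diff [simp]: "hom_tail (u - v) = hom_tail u - hom_tail v"
  and hom_tail_scaleR [simp]: "hom_tail (c *\<^sub>R u) = c *\<^sub>R hom_tail u"
  and hom_tail_uminus [simp]: "hom_tail (- u) = - hom_tail u"
  and hom_tail_zero [simp]: "hom_tail 0 = 0"
  by (simp_all add: vec_eq_iff)

lemma hom_lift_neq_zero: "hom_lift x \<noteq> 0"
  by (metis hom_lift_None zero_index zero_neq_one)

lemma sum_UNIV_option:
  "(\<Sum>i\<in>(UNIV::'n::finite option set). f i) = f None + (\<Sum>j\<in>UNIV. f (Some j))"
proof -
  have "(\<Sum>i\<in>(UNIV::'n option set). f i) = f None + sum f (range Some)"
    by (simp add: UNIV_option_conv)
  then show ?thesis
    by (simp add: sum.reindex)
qed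

lemma vec_option_eq_iff:
  "(u::real^('n::finite option)) = v \<longleftrightarrow> u $ None = v $ None \<and> hom_tail u = hom_tail v"
  by (auto simp: vec_eq_iff) (metis not_None_eq)

lemma norm_hom_tail_le: "norm (hom_tail w) \<le> norm w"
proof -
  have "hom_tail w \<bullet> hom_tail w \<le> w $ None * w $ None + hom_tail w \<bullet> hom_tail w"
    by simp
  also have "\<dots> = w \<bullet> w"
    by (simp add: inner_vec_def sum_UNIV_option[where f="\<lambda>i. w $ i * w $ i"])
  finally show ?thesis
    by (simp add: norm_eq_sqrt_inner)
qed

lemma bounded_linear_hom_tail: "bounded_linear hom_tail"
  by (rule bounded_linear_intro[where K=1]) (auto simp: norm_hom_tail_le)

lemma hom_lift_convex_comb:
  "hom_lift ((1 - a) *\<^sub>R x + a *\<^sub>R y) = (1 - a) *\<^sub>R hom_lift x + a *\<^sub>R hom_lift y"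
  by (simp add: vec_option_eq_iff algebra_simps)

lemma mult_hom_lift_convex_comb:
  "M *v hom_lift ((1 - a) *\<^sub>R x + a *\<^sub>R y) = (1 - a) *\<^sub>R (M *v hom_lift x) + a *\<^sub>R (M *v hom_lift y)"
  by (simp add: hom_lift_convex_comb matrix_vector_right_distrib matrix_vector_mult_scaleR)

lemma proj_apply_eq:
  "proj_apply M x = inverse ((M *v hom_lift x) $ None) *\<^sub>R hom_tail (M *v hom_lift x)"
  by (simp add: proj_apply_def vec_eq_iff Let_def field_simps)

lemma proj_apply_uminus [simp]: "proj_apply (- M) = proj_apply M"
  by (rule ext) (simp add: proj_apply_def matrix_vector_mult_def sum_negf Let_def vec_eq_iff)

lemma continuous_on_mult_hom_lift: "continuous_on S (\<lambda>x. (M *v hom_lift x) $ k)"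
proof -
  have "(M *v hom_lift x) $ k = M $ k $ None + (\<Sum>j\<in>UNIV. M $ k $ Some j * x $ j)" for x
    by (simp add: matrix_vector_mult_def sum_UNIV_option)
  then show ?thesis
    by (simp only:) (intro continuous_intros)
qed

lemma proj_apply_inj:
  assumes M: "invertible M" and "proj_finite_at M x" "proj_finite_at M y"
    and eq: "proj_apply M x = proj_apply M y"
  shows "x = y"
proof -
  define gx where "gx = (M *v hom_lift x) $ None"
  define gy where "gy = (M *v hom_lift y) $ None"
  have "gx \<noteq> 0" "gy \<noteq> 0"
    using assms by (simp_all add: proj_finite_at_def gx_def gy_def)
  have "M *v (inverse gx *\<^sub>R hom_lift x) = M *v (inverse gy *\<^sub>R hom_lift y)"
    using eq \<open>gx \<noteq> 0\<close> \<open>gy \<noteq> 0\<close> unfolding vec_option_eq_iff proj_apply_eq gx_def gy_def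
    by (simp add: matrix_vector_mult_scaleR)
  then have lift_eq: "inverse gx *\<^sub>R hom_lift x = inverse gy *\<^sub>R hom_lift y"
    using M unfolding invertible_eq_bij bij_def inj_on_def by blast
  then have "(inverse gx *\<^sub>R hom_lift x) $ None = (inverse gy *\<^sub>R hom_lift y) $ None"
    by simp
  then have "inverse gx = inverse gy"
    by (simp del: inverse_eq_iff_eq)
  moreover have "inverse gx *\<^sub>R x = inverse gy *\<^sub>R y"
    using arg_cong[OF lift_eq, of hom_tail] by simp
  ultimately show ?thesis
    using \<open>gx \<noteq> 0\<close> by simp
qed

lemma squeeze_radii_le_1:
  assumes "r \<in> squeeze_radii D z"
  shows "r \<le> 1"
proof -
  from assms obtain M where "0 < r" "proj_apply M ` D \<subseteq> ball 0 1" "ball 0 r \<subseteq> proj_apply M ` D"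
    unfolding squeeze_radii_def by blast
  then have "ball (0::real^'a) r \<subseteq> ball 0 1"
    by blast
  with \<open>0 < r\<close> show ?thesis
    by (simp add: ball_subset_ball_iff)
qed

lemma squeeze_radii_downward_closed:
  assumes "r \<in> squeeze_radii D z" "0 < r'" "r' \<le> r"
  shows "r' \<in> squeeze_radii D z"
proof -
  obtain M :: "real^('a option)^('a option)" where M: "invertible M" "\<forall>x\<in>D. proj_finite_at M x"
    "proj_apply M z = 0" "proj_apply M ` D \<subseteq> ball 0 1" "ball 0 r \<subseteq> proj_apply M ` D"
    using assms(1) unfolding squeeze_radii_def by blast
  moreover have "ball 0 r' \<subseteq> ball (0::real^'a) r"
    using assms(3) by (rule subset_ball)
  ultimately show ?thesis
    using assms(2) unfolding squeeze_radii_def by blast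
qed

lemma squeezing_ge:
  assumes "r \<in> squeeze_radii D z"
  shows "r \<le> squeezing D z"
proof -
  have "bdd_above (squeeze_radii D z)"
    using squeeze_radii_le_1 by (meson bdd_above_def)
  with assms show ?thesis
    unfolding squeezing_def by (auto intro: cSup_upper)
qed

lemma squeezing_nonneg: "0 \<le> squeezing D z"
proof (cases "squeeze_radii D z = {}")
  case False
  then obtain r where r: "r \<in> squeeze_radii D z"
    by blast
  then have "0 < r"
    by (simp add: squeeze_radii_def)
  with squeezing_ge[OF r] show ?thesis
    by simp
qed (simp add: squeezing_def)

lemma squeeze_radii_less_squeezing:
  assumes "0 < \<rho>" "\<rho> < squeezing D z"
  shows "\<rho> \<in> squeeze_radii D z"
proof -
  have ne: "squeeze_radii D z \<noteq> {}" and "\<rho> < Sup (squeeze_radii D z)"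
    using assms by (auto simp: squeezing_def split: if_splits)
  then obtain r where "r \<in> squeeze_radii D z" "\<rho> < r"
    using less_cSupD by blast
  then show ?thesis
    using squeeze_radii_downward_closed assms by force
qed

section \<open>Domains with a uniformly positive squeezing function\<close>

lemma hom_line_bounded_imp_zero:
  fixes G B :: "real^('n::finite option)"
  assumes den: "\<And>t. G $ None + t * B $ None \<noteq> 0"
    and bounded: "\<And>t. norm (inverse (G $ None + t * B $ None) *\<^sub>R (hom_tail G + t *\<^sub>R hom_tail B)) < 1"
  shows "B = 0"
proof -
  have B_None: "B $ None = 0"
    using den[of "- G $ None / B $ None"] by (cases "B $ None = 0") auto
  have G_None: "G $ None \<noteq> 0"
    using den[of 0] by simp
  have "hom_tail B = 0"
  proof (rule ccontr)
    assume "hom_tail B \<noteq> 0"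
    define t where "t = (2 * \<bar>G $ None\<bar> + norm (hom_tail G)) / norm (hom_tail B)"
    have "t \<ge> 0" "t * norm (hom_tail B) = 2 * \<bar>G $ None\<bar> + norm (hom_tail G)"
      using \<open>hom_tail B \<noteq> 0\<close> by (simp_all add: t_def)
    then have "2 * \<bar>G $ None\<bar> \<le> norm (hom_tail G + t *\<^sub>R hom_tail B)"
      using norm_triangle_ineq2[of "t *\<^sub>R hom_tail B" "- hom_tail G"] by (simp add: algebra_simps)
    moreover have "norm (hom_tail G + t *\<^sub>R hom_tail B) < \<bar>G $ None\<bar>"
    proof -
      have "\<bar>inverse (G $ None)\<bar> * norm (hom_tail G + t *\<^sub>R hom_tail B) < 1"
        using bounded[of t] B_None by (simp only: norm_scaleR) simp
      then have "\<bar>G $ None\<bar> * (\<bar>inverse (G $ None)\<bar> * norm (hom_tail G + t *\<^sub>R hom_tail B)) < \<bar>G $ None\<bar> * 1"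
        using G_None by (intro mult_strict_left_mono) auto
      then show ?thesis
        using G_None by (simp add: abs_inverse mult.assoc[symmetric])
    qed
    ultimately show False
      by simp
  qed
  with B_None show ?thesis
    by (simp add: vec_option_eq_iff)
qed

lemma squeeze_radii_empty_if_contains_line:
  fixes D :: "(real^'n::finite) set"
  assumes "contains_line D"
  shows "squeeze_radii D z = {}"
proof (rule ccontr)
  assume "squeeze_radii D z \<noteq> {}"
  then obtain M :: "real^('n option)^('n option)" where M: "invertible M"
      "\<forall>x\<in>D. proj_finite_at M x" "proj_apply M ` D \<subseteq> ball 0 1"
    unfolding squeeze_radii_def by blast
  from assms obtain a v where v: "v \<noteq> 0" "\<And>t::real. a + t *\<^sub>R v \<in> D"
    unfolding contains_line_def by blast
  define V :: "real^('n option)" where "V = (\<chi> i. case i of None \<Rightarrow> 0 | Some j \<Rightarrow> v $ j)"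
  have "hom_lift (a + t *\<^sub>R v) = hom_lift a + t *\<^sub>R V" for t
    by (simp add: vec_option_eq_iff V_def vec_eq_iff)
  then have line: "M *v hom_lift (a + t *\<^sub>R v) = M *v hom_lift a + t *\<^sub>R (M *v V)" for t
    by (simp add: matrix_vector_right_distrib matrix_vector_mult_scaleR)
  have "M *v V = 0"
  proof (rule hom_line_bounded_imp_zero)
    fix t
    have "proj_finite_at M (a + t *\<^sub>R v)" "proj_apply M (a + t *\<^sub>R v) \<in> ball 0 1"
      using M(2,3) v(2)[of t] by blast+
    then show "(M *v hom_lift a) $ None + t * (M *v V) $ None \<noteq> 0"
      and "norm (inverse ((M *v hom_lift a) $ None + t * (M *v V) $ None) *\<^sub>R
          (hom_tail (M *v hom_lift a) + t *\<^sub>R hom_tail (M *v V))) < 1"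
      by (simp_all add: proj_finite_at_def proj_apply_eq line)
  qed
  then have "M *v V = M *v 0"
    by simp
  then have "V = 0"
    using M(1) unfolding invertible_eq_bij bij_def inj_on_def by blast
  then have "v = 0"
    by (simp add: V_def vec_eq_iff) (metis option.simps(5))
  with v show False
    by simp
qed

lemma convex_proj_apply_preimage:
  assumes "convex S"
  shows "convex {y. 0 < (M *v hom_lift y) $ None \<and> proj_apply M y \<in> S}"
  unfolding convex_def
proof (intro ballI allI impI)
  fix x y and u v :: real
  assume x: "x \<in> {y. 0 < (M *v hom_lift y) $ None \<and> proj_apply M y \<in> S}"
    and y: "y \<in> {y. 0 < (M *v hom_lift y) $ None \<and> proj_apply M y \<in> S}"
    and uv: "0 \<le> u" "0 \<le> v" "u + v = 1"
  define gx where "gx = (M *v hom_lift x) $ None"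
  define gy where "gy = (M *v hom_lift y) $ None"
  have gx: "0 < gx" and gy: "0 < gy"
    using x y by (simp_all add: gx_def gy_def)
  have lift: "M *v hom_lift (u *\<^sub>R x + v *\<^sub>R y) = u *\<^sub>R (M *v hom_lift x) + v *\<^sub>R (M *v hom_lift y)"
    using mult_hom_lift_convex_comb[of M v x y] uv(3) by (simp add: eq_diff_eq[symmetric])
  have den_pos: "0 < u * gx + v * gy"
    using uv gx gy by (cases "u = 0") (auto intro: add_pos_nonneg)
  have tail_x: "hom_tail (M *v hom_lift x) = gx *\<^sub>R proj_apply M x"
    and tail_y: "hom_tail (M *v hom_lift y) = gy *\<^sub>R proj_apply M y"
    using gx gy by (simp_all add: proj_apply_eq gx_def gy_def)
  have "proj_apply M (u *\<^sub>R x + v *\<^sub>R y)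
      = inverse (u * gx + v * gy) *\<^sub>R (u *\<^sub>R hom_tail (M *v hom_lift x) + v *\<^sub>R hom_tail (M *v hom_lift y))"
    by (simp add: proj_apply_eq lift gx_def gy_def)
  also have "\<dots> = (u * gx / (u * gx + v * gy)) *\<^sub>R proj_apply M x
      + (v * gy / (u * gx + v * gy)) *\<^sub>R proj_apply M y"
    by (simp add: tail_x tail_y scaleR_add_right divide_inverse mult.commute mult.left_commute)
  also have "\<dots> \<in> S"
    using x y uv gx gy den_pos
    by (intro convexD[OF assms]) (auto simp: add_divide_distrib[symmetric])
  finally show "u *\<^sub>R x + v *\<^sub>R y \<in> {y. 0 < (M *v hom_lift y) $ None \<and> proj_apply M y \<in> S}"
    using den_pos by (simp add: lift gx_def gy_def)
qed

lemma linear_fractional_increment: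
  fixes N V :: "'a::real_normed_vector"
  assumes "a \<noteq> 0" "a + t * b \<noteq> 0"
  shows "inverse (a + t * b) *\<^sub>R (N + t *\<^sub>R V) - inverse a *\<^sub>R N
       = (t / (a * (a + t * b))) *\<^sub>R (a *\<^sub>R V - b *\<^sub>R N)"
proof -
  define c where "c = t / (a * (a + t * b))"
  have "a * (a + t * b) \<noteq> 0"
    using assms by simp
  then have coeffs: "inverse (a + t * b) - inverse a = - (c * b)" "t * inverse (a + t * b) = c * a"
    using assms by (simp_all add: c_def field_simps)
  have "inverse (a + t * b) *\<^sub>R (N + t *\<^sub>R V) - inverse a *\<^sub>R N
      = (inverse (a + t * b) - inverse a) *\<^sub>R N + (t * inverse (a + t * b)) *\<^sub>R V"
    by (simp add: algebra_simps)
  also have "\<dots> = (- (c * b)) *\<^sub>R N + (c * a) *\<^sub>R V"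
    by (simp only: coeffs)
  also have "\<dots> = c *\<^sub>R (a *\<^sub>R V - b *\<^sub>R N)"
    by (simp add: algebra_simps)
  finally show ?thesis
    by (simp add: c_def)
qed

text \<open>Taking \<open>t = \<plusminus>l\<close> against the sign of \<open>b\<close>, the two hypotheses give \<open>\<bar>b\<bar> < a / l\<close> and
  \<open>l \<parallel>a V - b N\<parallel> < 2 a\<^sup>2\<close>.\<close>

lemma linear_fractional_increment_le:
  fixes N V :: "'a::real_normed_vector"
  assumes "2 < l"
    and den: "\<And>t. \<bar>t\<bar> \<le> l \<Longrightarrow> 0 < a + t * b"
    and img: "\<And>t. \<bar>t\<bar> \<le> l \<Longrightarrow> norm (inverse (a + t * b) *\<^sub>R (N + t *\<^sub>R V)) < 1"
  shows "norm (inverse (a + b) *\<^sub>R (N + V) - inverse a *\<^sub>R N) \<le> 4 / l"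
proof -
  have a: "0 < a"
    using den[of 0] assms(1) by simp
  define W where "W = a *\<^sub>R V - b *\<^sub>R N"
  define t where "t = (if 0 \<le> b then - l else l)"
  have t: "\<bar>t\<bar> = l" "t * b = - (l * \<bar>b\<bar>)"
    using assms(1) by (auto simp: t_def)
  have den_t: "0 < a - l * \<bar>b\<bar>"
    using den[of t] t by simp
  have "norm (inverse (a + t * b) *\<^sub>R (N + t *\<^sub>R V) - inverse a *\<^sub>R N)
      \<le> norm (inverse (a + t * b) *\<^sub>R (N + t *\<^sub>R V)) + norm (inverse a *\<^sub>R N)"
    by (rule norm_triangle_ineq4)
  also have "\<dots> < 2"
    using img[of t] img[of 0] t(1) assms(1) by fastforce
  finally have "norm (inverse (a + t * b) *\<^sub>R (N + t *\<^sub>R V) - inverse a *\<^sub>R N) < 2" .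
  then have "l / (a * (a - l * \<bar>b\<bar>)) * norm W < 2"
    using linear_fractional_increment[of a t b N V] a den_t t by (simp add: W_def abs_mult)
  then have "l * norm W < 2 * a * (a - l * \<bar>b\<bar>)"
    using a den_t by (simp add: field_simps)
  also have "\<dots> \<le> 2 * a * a"
    using a assms(1) by (simp add: mult_left_mono)
  finally have W: "norm W < 2 * a * a / l"
    using assms(1) by (simp add: field_simps)
  have "\<bar>b\<bar> < a / l"
    using den_t assms(1) by (simp add: field_simps)
  also have "\<dots> < a / 2"
    using a assms(1) by (intro divide_strict_left_mono) auto
  finally have "\<bar>b\<bar> < a / 2" .
  then have ab: "a / 2 < a + b"
    by linarith
  have "norm (inverse (a + b) *\<^sub>R (N + V) - inverse a *\<^sub>R N) = norm W / (a * (a + b))"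
    using linear_fractional_increment[of a 1 b N V] a ab by (simp add: W_def abs_mult)
  also have "\<dots> \<le> norm W / (a * (a / 2))"
    using a ab by (intro divide_left_mono mult_pos_pos mult_strict_left_mono) auto
  also have "\<dots> \<le> 4 / l"
    using W a assms(1) by (simp add: field_simps)
  finally show ?thesis .
qed

lemma proj_apply_dist_le:
  assumes ball: "ball q \<delta> \<subseteq> {y. 0 < (M *v hom_lift y) $ None \<and> proj_apply M y \<in> ball 0 1}"
    and close: "norm (z - q) < \<delta> / 4"
  shows "dist (proj_apply M q) (proj_apply M z) \<le> 8 * norm (z - q) / \<delta>"
proof (cases "z = q")
  case False
  define h where "h = z - q"
  define l where "l = \<delta> / (2 * norm h)"
  have h: "0 < norm h"
    using False by (simp add: h_def)
  have l: "2 < l" "4 / l = 8 * norm h / \<delta>"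
    using close h by (simp_all add: l_def h_def field_simps)
  have "0 < \<delta>"
    using close h unfolding h_def by linarith
  define G where "G = M *v hom_lift q"
  define A where "A = M *v hom_lift z - G"
  have line: "M *v hom_lift (q + t *\<^sub>R h) = G + t *\<^sub>R A" for t
  proof -
    have "q + t *\<^sub>R h = (1 - t) *\<^sub>R q + t *\<^sub>R z"
      by (simp add: h_def algebra_simps)
    then have "M *v hom_lift (q + t *\<^sub>R h) = (1 - t) *\<^sub>R G + t *\<^sub>R (M *v hom_lift z)"
      by (simp only: mult_hom_lift_convex_comb G_def)
    then show ?thesis
      by (simp add: A_def algebra_simps)
  qed
  have on_line: "proj_apply M (q + t *\<^sub>R h)
      = inverse (G $ None + t * A $ None) *\<^sub>R (hom_tail G + t *\<^sub>R hom_tail A)" for t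
    by (simp add: proj_apply_eq line)
  have near: "q + t *\<^sub>R h \<in> ball q \<delta>" if "\<bar>t\<bar> \<le> l" for t
  proof -
    have "\<bar>t\<bar> * norm h \<le> \<delta> / 2"
      using that h by (simp add: l_def field_simps)
    then show ?thesis
      using \<open>0 < \<delta>\<close> by (simp add: dist_norm h_def)
  qed
  then have "0 < G $ None + t * A $ None"
      "norm (inverse (G $ None + t * A $ None) *\<^sub>R (hom_tail G + t *\<^sub>R hom_tail A)) < 1"
    if "\<bar>t\<bar> \<le> l" for t
    using subsetD[OF ball near[OF that]] by (simp_all add: line on_line[symmetric])
  from linear_fractional_increment_le[OF l(1) this] show ?thesis
    using on_line[of 0] on_line[of 1] l(2)
    by (simp add: dist_norm norm_minus_commute h_def)
qed simp

lemma nonconvex_connected_boundary_point: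
  fixes D :: "'a::real_normed_vector set"
  assumes "open D" "connected D" "D \<noteq> {}" "\<not> convex D"
  obtains q where "q \<in> interior (convex hull D)" "q \<in> closure D" "q \<notin> D"
proof -
  let ?H = "convex hull D"
  have open_H: "open ?H"
    using assms(1) by (rule open_convex_hull)
  have "\<exists>q\<in>?H. q \<in> closure D \<and> q \<notin> D"
  proof (rule ccontr)
    assume "\<not> ?thesis"
    then have closed_in_H: "q \<in> D" if "q \<in> ?H" "q \<in> closure D" for q
      using that by blast
    have "D \<inter> ?H = {} \<or> (- closure D) \<inter> ?H = {}"
      using closed_in_H closure_subset
      by (intro connectedD[OF convex_connected[OF convex_convex_hull] assms(1)]) fastforce+
    moreover have "D \<inter> ?H \<noteq> {}"
      using assms(3) hull_subset by fastforce
    ultimately have "?H \<subseteq> closure D"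
      by blast
    then have "?H \<subseteq> D"
      using closed_in_H by blast
    then have "convex hull D = D"
      using hull_subset[of D convex] by (rule subset_antisym)
    then show False
      using assms(4) convex_convex_hull by metis
  qed
  then show ?thesis
    using that open_H by (auto simp: interior_open)
qed

lemma uminus_matrix_vector_mult: "(- M) *v v = - (M *v (v :: real^'n::finite))"
  by (simp add: vec_eq_iff matrix_vector_mult_def sum_negf)

lemma invertible_uminus: "invertible M \<Longrightarrow> invertible (- M :: real^'n::finite^'n)"
  using scalar_invertible[of "-1" M] by simp

lemma proj_denominator_pos_on_connected:
  assumes "connected D" "invertible M" "\<forall>x\<in>D. proj_finite_at M x"
  obtains M' where "invertible M'" "proj_apply M' = proj_apply M"
    "\<forall>x\<in>D. 0 < (M' *v hom_lift x) $ None"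
proof -
  let ?g = "\<lambda>x. (M *v hom_lift x) $ None"
  have nonzero: "?g x \<noteq> 0" if "x \<in> D" for x
    using assms(3) that by (simp add: proj_finite_at_def)
  have "open {x. 0 < ?g x}" "open {x. ?g x < 0}"
    by (auto intro!: open_Collect_less continuous_on_mult_hom_lift)
  then have "{x. 0 < ?g x} \<inter> D = {} \<or> {x. ?g x < 0} \<inter> D = {}"
    using nonzero by (intro connectedD[OF assms(1)]) (auto simp: linorder_neq_iff)
  then have "(\<forall>x\<in>D. 0 < ((- M) *v hom_lift x) $ None) \<or> (\<forall>x\<in>D. 0 < ?g x)"
    using nonzero by (fastforce simp: uminus_matrix_vector_mult linorder_neq_iff)
  then show ?thesis
    using that assms(2) invertible_uminus by (metis proj_apply_uminus)
qed

text \<open>The preimage of the unit ball is convex and contains \<open>D\<close>, hence the ball around \<open>q\<close>; on that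
  ball the map is nearly constant, so \<open>q\<close> is mapped into the inner ball.\<close>

lemma squeeze_radii_near_boundary_point:
  fixes D :: "(real^'n::finite) set"
  assumes "connected D" "q \<notin> D" "ball q \<delta> \<subseteq> convex hull D"
    and z: "z \<in> D" "norm (z - q) < \<delta> / 4" "8 * norm (z - q) < \<rho> * \<delta>"
  shows "\<rho> \<notin> squeeze_radii D z"
proof
  assume "\<rho> \<in> squeeze_radii D z"
  then obtain M :: "real^('n option)^('n option)" where M: "invertible M"
      "\<forall>x\<in>D. proj_finite_at M x" "proj_apply M z = 0"
      "proj_apply M ` D \<subseteq> ball 0 1" "ball 0 \<rho> \<subseteq> proj_apply M ` D"
    unfolding squeeze_radii_def by blast
  obtain M' where M': "invertible M'" "proj_apply M' = proj_apply M"
      "\<forall>x\<in>D. 0 < (M' *v hom_lift x) $ None"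
    using proj_denominator_pos_on_connected assms(1) M(1,2) by blast
  let ?T = "{y. 0 < (M' *v hom_lift y) $ None \<and> proj_apply M' y \<in> ball 0 1}"
  have "D \<subseteq> ?T"
    using M(4) M'(2,3) by auto
  then have "convex hull D \<subseteq> ?T"
    by (rule hull_minimal) (rule convex_proj_apply_preimage[OF convex_ball])
  then have ball_T: "ball q \<delta> \<subseteq> ?T"
    using assms(3) by blast
  have "0 < \<delta>"
    using z(2) norm_ge_zero[of "z - q"] by linarith
  then have q_T: "q \<in> ?T"
    using ball_T centre_in_ball[of q \<delta>] by blast
  have "dist (proj_apply M' q) (proj_apply M' z) \<le> 8 * norm (z - q) / \<delta>"
    using ball_T z(2) by (rule proj_apply_dist_le)
  also have "\<dots> < \<rho>"
    using z(3) \<open>0 < \<delta>\<close> by (simp add: field_simps)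
  finally have "proj_apply M' q \<in> ball 0 \<rho>"
    using M(3) M'(2) by (simp add: dist_commute)
  then obtain y where y: "y \<in> D" "proj_apply M' q = proj_apply M' y"
    using M(5) M'(2) by auto
  have "proj_finite_at M' q" "proj_finite_at M' y"
    using q_T M'(3) y(1) by (auto simp: proj_finite_at_def)
  then have "q = y"
    using proj_apply_inj[OF M'(1) _ _ y(2)] by blast
  with y(1) assms(2) show False
    by simp
qed

lemma squeeze_radii_nonconvex:
  fixes D :: "(real^'n::finite) set"
  assumes "domain D" "\<not> convex D" "0 < \<rho>"
  shows "\<exists>z\<in>D. \<rho> \<notin> squeeze_radii D z"
proof -
  obtain q where q: "q \<in> interior (convex hull D)" "q \<in> closure D" "q \<notin> D"
    using nonconvex_connected_boundary_point assms(1,2) unfolding domain_def by blast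
  then obtain \<delta> where \<delta>: "0 < \<delta>" "ball q \<delta> \<subseteq> convex hull D"
    by (meson mem_interior)
  have "0 < min (\<delta> / 4) (\<rho> * \<delta> / 8)"
    using \<delta>(1) assms(3) by simp
  then obtain z where z: "z \<in> D" "dist z q < min (\<delta> / 4) (\<rho> * \<delta> / 8)"
    using q(2) closure_approachable by metis
  then have "\<rho> \<notin> squeeze_radii D z"
    using assms(1) q(3) \<delta>(2) unfolding domain_def
    by (intro squeeze_radii_near_boundary_point) (auto simp: dist_norm)
  with z(1) show ?thesis
    by blast
qed

lemma proper_convex_if_squeezing_bounded_below:
  fixes D :: "(real^'n::finite) set"
  assumes "domain D" "0 < (INF z\<in>D. squeezing D z)"
  shows "proper_convex D"
proof -
  define s where "s = (INF z\<in>D. squeezing D z)"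
  have "bdd_below (squeezing D ` D)"
    using squeezing_nonneg by (meson bdd_belowI2)
  then have "s \<le> squeezing D z" if "z \<in> D" for z
    unfolding s_def using that by (rule cINF_lower)
  moreover have "0 < s"
    using assms(2) by (simp add: s_def)
  ultimately have radius: "s / 2 \<in> squeeze_radii D z" if "z \<in> D" for z
    using that by (intro squeeze_radii_less_squeezing) force+
  have "convex D"
    using squeeze_radii_nonconvex[OF assms(1), of "s / 2"] radius \<open>0 < s\<close> by auto
  moreover have "\<not> contains_line D"
    using radius squeeze_radii_empty_if_contains_line assms(1) by (fastforce simp: domain_def)
  ultimately show ?thesis
    by (simp add: proper_convex_def)
qed

section \<open>The homogenization cone of a convex domain\<close>

definition hom_cone :: "(real^'n::finite) set \<Rightarrow> (real^('n option)) set" where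
  "hom_cone D = {w. 0 < w $ None \<and> inverse (w $ None) *\<^sub>R hom_tail w \<in> D}"

lemma scaleR_hom_lift_in_hom_cone: "x \<in> D \<Longrightarrow> 0 < c \<Longrightarrow> c *\<^sub>R hom_lift x \<in> hom_cone D"
  by (simp add: hom_cone_def)

lemma hom_cone_eq_scaleR_hom_lift:
  "w \<in> hom_cone D \<Longrightarrow> w = w $ None *\<^sub>R hom_lift (inverse (w $ None) *\<^sub>R hom_tail w)"
  by (simp add: hom_cone_def vec_option_eq_iff)

lemma scaleR_in_hom_cone:
  assumes "w \<in> hom_cone D" "0 < c"
  shows "c *\<^sub>R w \<in> hom_cone D"
proof -
  have "inverse ((c *\<^sub>R w) $ None) *\<^sub>R hom_tail (c *\<^sub>R w) = inverse (w $ None) *\<^sub>R hom_tail w"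
    using assms(2) by simp
  then show ?thesis
    using assms by (simp only: hom_cone_def mem_Collect_eq) simp
qed

lemma open_hom_cone:
  fixes D :: "(real^'n::finite) set"
  assumes "open D"
  shows "open (hom_cone D)"
proof -
  let ?H = "{w::real^('n option). 0 < w $ None}"
  have eq: "hom_cone D = ?H \<inter> (\<lambda>w. inverse (w $ None) *\<^sub>R hom_tail w) -` D"
    by (auto simp: hom_cone_def)
  have "continuous_on ?H (\<lambda>w. inverse (w $ None) *\<^sub>R hom_tail w)"
    by (intro continuous_intros linear_continuous_on bounded_linear_hom_tail) auto
  moreover have "open ?H"
    by (intro open_Collect_less continuous_intros)
  ultimately show ?thesis
    unfolding eq using assms by (rule continuous_open_preimage)
qed

lemma convex_hom_cone:
  assumes "convex D"
  shows "convex (hom_cone D)"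
  unfolding convex_def
proof (intro ballI allI impI)
  fix x y and u v :: real
  assume x: "x \<in> hom_cone D" and y: "y \<in> hom_cone D" and uv: "0 \<le> u" "0 \<le> v" "u + v = 1"
  define a where "a = x $ None"
  define b where "b = y $ None"
  have a: "0 < a" and b: "0 < b"
    using x y by (auto simp: hom_cone_def a_def b_def)
  have den: "0 < u * a + v * b"
    using uv a b by (cases "u = 0") (auto intro: add_pos_nonneg)
  have e1: "(u * a / (u * a + v * b)) *\<^sub>R (inverse a *\<^sub>R hom_tail x) = (u / (u * a + v * b)) *\<^sub>R hom_tail x"
    and e2: "(v * b / (u * a + v * b)) *\<^sub>R (inverse b *\<^sub>R hom_tail y) = (v / (u * a + v * b)) *\<^sub>R hom_tail y"
    using a b by simp_all
  have "inverse (u * a + v * b) *\<^sub>R hom_tail (u *\<^sub>R x + v *\<^sub>R y)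
     = (u * a / (u * a + v * b)) *\<^sub>R (inverse a *\<^sub>R hom_tail x)
       + (v * b / (u * a + v * b)) *\<^sub>R (inverse b *\<^sub>R hom_tail y)"
    unfolding e1 e2 by (simp add: scaleR_add_right divide_inverse mult.commute)
  also have "\<dots> \<in> D"
    using x y uv a b den
    by (intro convexD[OF assms]) (auto simp: hom_cone_def a_def b_def add_divide_distrib[symmetric])
  finally show "u *\<^sub>R x + v *\<^sub>R y \<in> hom_cone D"
    using den by (simp add: hom_cone_def a_def b_def)
qed

lemma zero_in_closure_hom_cone:
  assumes "z \<in> D"
  shows "0 \<in> closure (hom_cone D)"
proof -
  have "(\<lambda>n. inverse (real (Suc n)) *\<^sub>R hom_lift z) \<longlonglongrightarrow> 0 *\<^sub>R hom_lift z"
    by (intro tendsto_intros LIMSEQ_inverse_real_of_nat)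
  moreover have "inverse (real (Suc n)) *\<^sub>R hom_lift z \<in> hom_cone D" for n
    using assms by (intro scaleR_hom_lift_in_hom_cone) auto
  ultimately show ?thesis
    unfolding closure_sequential by force
qed

lemma convex_cone_closure_hom_cone:
  assumes "convex D" "z \<in> D"
  shows "convex_cone (closure (hom_cone D))"
proof -
  let ?K = "closure (hom_cone D)"
  have convex: "convex ?K"
    using convex_hom_cone[OF assms(1)] by simp
  have scaled: "c *\<^sub>R w \<in> ?K" if "w \<in> ?K" "0 \<le> c" for w c
  proof (cases "c = 0")
    case False
    then have "(*\<^sub>R) c ` hom_cone D \<subseteq> hom_cone D"
      using that(2) False by (auto intro: scaleR_in_hom_cone)
    then have "closure ((*\<^sub>R) c ` hom_cone D) \<subseteq> ?K"
      by (rule closure_mono)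
    then show ?thesis
      using that(1) closure_scaleR by blast
  qed (simp add: zero_in_closure_hom_cone[OF assms(2)])
  have "x + y \<in> ?K" if "x \<in> ?K" "y \<in> ?K" for x y
    using scaled[OF convexD[OF convex that, of "1/2" "1/2"], of 2] by (simp add: scaleR_add_right)
  then show ?thesis
    unfolding convex_cone_iff using zero_in_closure_hom_cone[OF assms(2)] scaled by blast
qed

lemma closure_hom_cone_None_nonneg: "w \<in> closure (hom_cone D) \<Longrightarrow> 0 \<le> w $ None"
  using closure_minimal[of "hom_cone D" "{w. 0 \<le> w $ None}"]
  by (force simp: hom_cone_def intro: closed_Collect_le continuous_intros)

text \<open>Writing \<open>c = (c\<^sub>0, c')\<close>, for \<open>c \<in> hom_cone D\<close> close to \<open>w\<close> the points \<open>(1 - t c\<^sub>0) y + t c'\<close> are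
  convex combinations of \<open>y\<close> and \<open>c' / c\<^sub>0 \<in> D\<close>, and they tend to \<open>y + t w'\<close>.\<close>

lemma closure_hom_cone_recession_closure:
  fixes D :: "(real^'n::finite) set"
  assumes "convex D" "w \<in> closure (hom_cone D)" "w $ None = 0" "y \<in> D" "0 \<le> t"
  shows "y + t *\<^sub>R hom_tail w \<in> closure D"
proof -
  obtain c where c: "\<And>n. c n \<in> hom_cone D" "c \<longlonglongrightarrow> w"
    using assms(2) unfolding closure_sequential by blast
  define p where "p n = (1 - t * c n $ None) *\<^sub>R y + t *\<^sub>R hom_tail (c n)" for n
  have "(\<lambda>n. t * c n $ None) \<longlonglongrightarrow> t * w $ None"
    by (intro tendsto_intros c(2))
  then have "eventually (\<lambda>n. t * c n $ None < 1) sequentially"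
    using assms(3) by (intro order_tendstoD(2)) auto
  moreover have "p n \<in> D" if "t * c n $ None < 1" for n
  proof -
    have pos: "0 < c n $ None" and "inverse (c n $ None) *\<^sub>R hom_tail (c n) \<in> D"
      using c(1)[of n] by (auto simp: hom_cone_def)
    then have "(1 - t * c n $ None) *\<^sub>R y + (t * c n $ None) *\<^sub>R (inverse (c n $ None) *\<^sub>R hom_tail (c n)) \<in> D"
      using that assms(4,5) by (intro convexD[OF assms(1)]) auto
    moreover have "t * c n $ None * inverse (c n $ None) = t"
      using pos by simp
    ultimately show ?thesis
      by (simp add: p_def)
  qed
  ultimately have "eventually (\<lambda>n. p n \<in> closure D) sequentially"
    by (auto elim!: eventually_mono intro: closure_subset[THEN subsetD])
  moreover have "p \<longlonglongrightarrow> (1 - t * w $ None) *\<^sub>R y + t *\<^sub>R hom_tail w"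
    unfolding p_def
    by (intro tendsto_intros c(2) bounded_linear.tendsto[OF bounded_linear_hom_tail])
  ultimately show ?thesis
    using assms(3) by (intro Lim_in_closed_set[of "closure D" _ sequentially]) auto
qed

lemma closure_hom_cone_recession:
  fixes D :: "(real^'n::finite) set"
  assumes "open D" "convex D" "w \<in> closure (hom_cone D)" "w $ None = 0" "x \<in> D" "0 \<le> t"
  shows "x + t *\<^sub>R hom_tail w \<in> D"
proof -
  obtain \<delta> where \<delta>: "0 < \<delta>" "ball x \<delta> \<subseteq> D"
    using assms(1,5) open_contains_ball by blast
  have "ball (x + t *\<^sub>R hom_tail w) \<delta> \<subseteq> closure D"
  proof
    fix p
    assume "p \<in> ball (x + t *\<^sub>R hom_tail w) \<delta>"
    then have "p - t *\<^sub>R hom_tail w \<in> D"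
      using \<delta>(2) by (auto simp: dist_norm algebra_simps)
    from closure_hom_cone_recession_closure[OF assms(2-4) this assms(6)] show "p \<in> closure D"
      by simp
  qed
  then have "x + t *\<^sub>R hom_tail w \<in> interior (closure D)"
    using \<delta>(1) mem_interior by blast
  then show ?thesis
    using convex_interior_closure[OF assms(2)] interior_open[OF assms(1)] by simp
qed

lemma closure_hom_cone_pointed:
  fixes D :: "(real^'n::finite) set"
  assumes "open D" "convex D" "\<not> contains_line D"
    and w: "w \<in> closure (hom_cone D)" "- w \<in> closure (hom_cone D)"
  shows "w = 0"
proof -
  have "D \<noteq> {}"
    using w(1) by (auto simp: hom_cone_def)
  then obtain z where z: "z \<in> D"
    by blast
  have w_None: "w $ None = 0"
    using closure_hom_cone_None_nonneg[OF w(1)] closure_hom_cone_None_nonneg[OF w(2)] by simp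
  have "z + t *\<^sub>R hom_tail w \<in> D" for t
  proof (cases "0 \<le> t")
    case True
    then show ?thesis
      using closure_hom_cone_recession[OF assms(1,2) w(1) w_None z] by simp
  next
    case False
    then show ?thesis
      using closure_hom_cone_recession[OF assms(1,2) w(2) _ z, of "- t"] w_None by simp
  qed
  then have "hom_tail w = 0"
    using assms(3) unfolding contains_line_def by blast
  then show ?thesis
    using w_None by (simp add: vec_option_eq_iff)
qed

section \<open>Decompositions of maximal determinant in a pointed cone\<close>

text \<open>Pointedness keeps \<open>-u\<close> at distance \<open>\<ge> \<epsilon> \<parallel>u\<parallel>\<close> from \<open>K\<close> for \<open>u \<in> K\<close>, and \<open>z - u \<in> K\<close> is at distance
  \<open>\<parallel>z\<parallel>\<close> from \<open>-u\<close>.\<close>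

lemma pointed_cone_summand_bounded:
  fixes K :: "'a::euclidean_space set"
  assumes "closed K" "convex_cone K" and pointed: "\<And>w. w \<in> K \<Longrightarrow> - w \<in> K \<Longrightarrow> w = 0"
  obtains B where "\<And>u. u \<in> K \<Longrightarrow> z - u \<in> K \<Longrightarrow> norm u \<le> B"
proof -
  define S where "S = K \<inter> sphere 0 1"
  have normalized: "inverse (norm u) *\<^sub>R u \<in> S" if "u \<in> K" "u \<noteq> 0" for u
    using that convex_cone_scaleR[OF assms(2)] by (simp add: S_def)
  show ?thesis
  proof (cases "S = {}")
    case True
    then have "u = 0" if "u \<in> K" for u
      using normalized that by blast
    then show ?thesis
      using that[of 0] by fastforce
  next
    case False
    have "compact S"
      unfolding S_def using assms(1) by (intro closed_Int_compact) auto
    moreover have "continuous_on S (\<lambda>u. infdist (- u) K)"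
      by (intro continuous_intros)
    ultimately obtain u0 where u0: "u0 \<in> S" "\<And>u. u \<in> S \<Longrightarrow> infdist (- u0) K \<le> infdist (- u) K"
      using continuous_attains_inf[OF _ False] by metis
    define \<epsilon> where "\<epsilon> = infdist (- u0) K"
    have "- u0 \<notin> K"
      using pointed u0(1) by (force simp: S_def)
    then have \<epsilon>: "0 < \<epsilon>"
      using infdist_pos_not_in_closed[OF assms(1) convex_cone_nonempty[OF assms(2)]]
      by (simp add: \<epsilon>_def)
    have "norm u \<le> norm z / \<epsilon>" if u: "u \<in> K" "z - u \<in> K" for u
    proof (cases "u = 0")
      case False
      define T where "T = norm u"
      have T: "0 < T"
        using False by (simp add: T_def)
      have "\<epsilon> \<le> infdist (- (inverse T *\<^sub>R u)) K"
        using u0(2)[OF normalized[OF u(1) False]] by (simp add: \<epsilon>_def T_def)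
      also have "\<dots> \<le> dist (- (inverse T *\<^sub>R u)) (inverse T *\<^sub>R (z - u))"
        using convex_cone_scaleR[OF assms(2), of "inverse T" "z - u"] u T by (intro infdist_le) simp
      also have "\<dots> = norm z / T"
        using T by (simp add: dist_norm algebra_simps divide_inverse)
      finally show ?thesis
        using \<epsilon> T by (simp add: T_def field_simps)
    qed (use \<epsilon> in simp)
    then show ?thesis
      using that by blast
  qed
qed

lemma convex_cone_sum:
  assumes "convex_cone K" "\<And>i. i \<in> I \<Longrightarrow> f i \<in> K"
  shows "sum f I \<in> K"
proof (cases "finite I")
  case True
  then show ?thesis
    using assms(2)
    by (induction I rule: finite_induct)
       (auto intro: convex_cone_contains_0[OF assms(1)] convex_cone_add[OF assms(1)])
qed (simp add: convex_cone_contains_0[OF assms(1)])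

lemma transpose_mult_vec_eq_sum: "transpose A *v x = (\<Sum>i\<in>UNIV. x $ i *\<^sub>R A $ i)"
  for A :: "real^'m::finite^'k::finite"
  by (simp add: vec_eq_iff matrix_vector_mult_def transpose_def sum_component mult.commute)

definition cone_decompositions :: "(real^'m) set \<Rightarrow> real^'m \<Rightarrow> (real^'m::finite^'m) set" where
  "cone_decompositions K z = {V. (\<forall>i. V $ i \<in> K) \<and> (\<Sum>i\<in>UNIV. V $ i) = z}"

lemma compact_cone_decompositions:
  fixes K :: "(real^'m::finite) set"
  assumes "closed K" "convex_cone K" "\<And>w. w \<in> K \<Longrightarrow> - w \<in> K \<Longrightarrow> w = 0"
  shows "compact (cone_decompositions K z)"
proof -
  obtain B where B: "\<And>u. u \<in> K \<Longrightarrow> z - u \<in> K \<Longrightarrow> norm u \<le> B"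
    using pointed_cone_summand_bounded[OF assms] by blast
  have row_bounded: "norm (V $ i) \<le> B" if V: "V \<in> cone_decompositions K z" for V i
  proof -
    have "z - V $ i = (\<Sum>k\<in>UNIV - {i}. V $ k)"
      using V by (simp add: cone_decompositions_def sum_diff1)
    also have "\<dots> \<in> K"
      using V by (intro convex_cone_sum[OF assms(2)]) (auto simp: cone_decompositions_def)
    finally show ?thesis
      using B V by (auto simp: cone_decompositions_def)
  qed
  have "norm V \<le> real CARD('m) * B" if "V \<in> cone_decompositions K z" for V
  proof -
    have "norm V \<le> (\<Sum>i\<in>UNIV. norm (V $ i))"
      unfolding norm_vec_def by (rule L2_set_le_sum) auto
    also have "\<dots> \<le> (\<Sum>i\<in>(UNIV::'m set). B)"
      by (intro sum_mono row_bounded[OF that])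
    finally show ?thesis
      by simp
  qed
  then have "bounded (cone_decompositions K z)"
    unfolding bounded_iff by blast
  moreover have "cone_decompositions K z = (\<Inter>i. (\<lambda>V. V $ i) -` K) \<inter> {V. (\<Sum>i\<in>UNIV. V $ i) = z}"
    by (auto simp: cone_decompositions_def)
  then have "closed (cone_decompositions K z)"
    by (simp only:) (intro closed_Int closed_INT ballI continuous_closed_vimage assms(1)
        closed_Collect_eq continuous_intros)
  ultimately show ?thesis
    by (simp add: compact_eq_bounded_closed)
qed

lemma det_uniform_rows_perturbed_nonzero:
  fixes z :: "real^'m::finite"
  defines "b \<equiv> \<lambda>k i. axis i 1 - (if i = k then (\<chi> j. 1) else 0)"
  assumes "z $ k \<noteq> 0" "\<epsilon> \<noteq> 0"
  shows "det (\<chi> i. inverse (real CARD('m)) *\<^sub>R z + \<epsilon> *\<^sub>R b k i) \<noteq> 0"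
proof -
  define m where "m = real CARD('m)"
  define V :: "real^'m^'m" where "V = (\<chi> i. inverse m *\<^sub>R z + \<epsilon> *\<^sub>R b k i)"
  have "transpose V *v x = 0 \<Longrightarrow> x = 0" for x
  proof -
    assume x0: "transpose V *v x = 0"
    define s where "s = (\<Sum>i\<in>UNIV. x $ i) / m"
    have "x $ i * b k i $ l = (if i = l then x $ i else 0) - (if i = k then x $ i else 0)" for i l
      by (simp add: b_def axis_def right_diff_distrib)
    then have sum_b: "(\<Sum>i\<in>UNIV. x $ i * b k i $ l) = x $ l - x $ k" for l
      by (simp add: sum_subtractf)
    have comp: "(transpose V *v x) $ l = s * z $ l + \<epsilon> * (x $ l - x $ k)" for l
    proof -
      have "(transpose V *v x) $ l = (\<Sum>i\<in>UNIV. x $ i * (inverse m * z $ l + \<epsilon> * b k i $ l))"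
        unfolding transpose_mult_vec_eq_sum by (simp add: V_def sum_component)
      also have "\<dots> = s * z $ l + \<epsilon> * (\<Sum>i\<in>UNIV. x $ i * b k i $ l)"
        by (simp add: s_def algebra_simps sum.distrib sum_distrib_left sum_divide_distrib divide_inverse)
      finally show ?thesis
        by (simp add: sum_b)
    qed
    have "s = 0"
      using comp[of k] x0 assms(2) by simp
    then have xl: "x $ l = x $ k" for l
      using comp[of l] x0 assms(3) by simp
    have "(\<Sum>i\<in>UNIV. x $ i) = (\<Sum>i\<in>(UNIV::'m set). x $ k)"
      using xl by (intro sum.cong) auto
    then have "m * x $ k = 0"
      using \<open>s = 0\<close> by (simp add: s_def m_def)
    then show "x = 0"
      using xl by (simp add: vec_eq_iff m_def)
  qed
  then have "invertible (transpose V)"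
    unfolding invertible_left_inverse matrix_left_invertible_ker by blast
  then show ?thesis
    by (simp add: invertible_det_nz V_def m_def)
qed

lemma cone_decomposition_nonsingular:
  fixes K :: "(real^'m::finite) set"
  assumes "convex_cone K" "ball z \<eta> \<subseteq> K" "0 < \<eta>" "z \<noteq> 0"
  obtains V where "V \<in> cone_decompositions K z" "det V \<noteq> 0"
proof -
  obtain k where k: "z $ k \<noteq> 0"
    using assms(4) by (auto simp: vec_eq_iff)
  define m where "m = real CARD('m)"
  define b :: "'m \<Rightarrow> real^'m" where "b i = axis i 1 - (if i = k then \<chi> j. 1 else 0)" for i
  define \<epsilon> where "\<epsilon> = \<eta> / (m * (1 + norm (\<chi> j. 1::real^'m)) + 1)"
  have m: "1 \<le> m"
    by (simp add: m_def)
  have den: "0 < m * (1 + norm (\<chi> j. 1::real^'m)) + 1"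
    using m by (simp add: add_pos_nonneg)
  then have \<epsilon>: "0 < \<epsilon>"
    using assms(3) by (simp add: \<epsilon>_def)
  define V :: "real^'m^'m" where "V = (\<chi> i. inverse m *\<^sub>R z + \<epsilon> *\<^sub>R b i)"
  have "V $ i \<in> K" for i
  proof -
    have "norm (b i) \<le> norm (axis i (1::real)) + norm (if i = k then \<chi> j. 1 else 0 :: real^'m)"
      unfolding b_def by (rule norm_triangle_ineq4)
    also have "\<dots> \<le> 1 + norm (\<chi> j. 1::real^'m)"
      by simp
    finally have "norm ((m * \<epsilon>) *\<^sub>R b i) \<le> m * \<epsilon> * (1 + norm (\<chi> j. 1::real^'m))"
      using \<epsilon> m by (simp add: mult_left_mono)
    also have "\<dots> < \<eta>"
      using den assms(3) by (simp add: \<epsilon>_def field_simps)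
    finally have "z + (m * \<epsilon>) *\<^sub>R b i \<in> K"
      using assms(2) by (auto simp: dist_norm)
    then have "inverse m *\<^sub>R (z + (m * \<epsilon>) *\<^sub>R b i) \<in> K"
      using convex_cone_scaleR[OF assms(1)] m by simp
    moreover have "inverse m *\<^sub>R (z + (m * \<epsilon>) *\<^sub>R b i) = V $ i"
      using m by (simp add: V_def scaleR_add_right)
    ultimately show ?thesis
      by simp
  qed
  moreover have "(\<Sum>i\<in>UNIV. V $ i) = z"
  proof -
    have sum_b: "(\<Sum>i\<in>UNIV. b i) = 0"
      by (simp add: b_def sum_subtractf vec_eq_iff axis_def sum_component)
    have "(\<Sum>i\<in>UNIV. V $ i) = (\<Sum>i\<in>(UNIV::'m set). inverse m *\<^sub>R z) + \<epsilon> *\<^sub>R (\<Sum>i\<in>UNIV. b i)"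
      by (simp add: V_def sum.distrib scaleR_sum_right)
    also have "(\<Sum>i\<in>(UNIV::'m set). inverse m *\<^sub>R z) = (m * inverse m) *\<^sub>R z"
      by (simp only: sum_constant_scaleR m_def scaleR_scaleR)
    finally show ?thesis
      using m sum_b by simp
  qed
  moreover have "det V \<noteq> 0"
    using det_uniform_rows_perturbed_nonzero[OF k, of \<epsilon>] \<epsilon>
    by (simp add: V_def b_def m_def)
  ultimately show ?thesis
    using that by (auto simp: cone_decompositions_def)
qed

lemma cone_decomposition_max_det:
  fixes K :: "(real^'m::finite) set"
  assumes "closed K" "convex_cone K" "\<And>w. w \<in> K \<Longrightarrow> - w \<in> K \<Longrightarrow> w = 0"
    and "ball z \<eta> \<subseteq> K" "0 < \<eta>" "z \<noteq> 0"
  obtains U where "U \<in> cone_decompositions K z" "det U \<noteq> 0"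
    "\<And>V. V \<in> cone_decompositions K z \<Longrightarrow> \<bar>det V\<bar> \<le> \<bar>det U\<bar>"
proof -
  obtain V0 where V0: "V0 \<in> cone_decompositions K z" "det V0 \<noteq> 0"
    using cone_decomposition_nonsingular[OF assms(2,4,5,6)] by blast
  have "continuous_on (cone_decompositions K z) (\<lambda>V. \<bar>det V\<bar>)"
    unfolding det_def by (intro continuous_intros)
  then obtain U where U: "U \<in> cone_decompositions K z"
      "\<And>V. V \<in> cone_decompositions K z \<Longrightarrow> \<bar>det V\<bar> \<le> \<bar>det U\<bar>"
    using continuous_attains_sup[OF compact_cone_decompositions[OF assms(1-3)]] V0(1) by blast
  moreover have "det U \<noteq> 0"
    using U(2)[OF V0(1)] V0(2) by auto
  ultimately show ?thesis
    using that by blast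
qed

lemma det_rescale_rows_add_combination:
  fixes U :: "real^'m::finite^'m" and c :: "real^'m"
  assumes nz: "\<And>i. i \<noteq> j \<Longrightarrow> 1 - t * c $ i \<noteq> 0"
  shows "det (\<chi> i. (1 - t * c $ i) *\<^sub>R U $ i + (if i = j then t *\<^sub>R (transpose U *v c) else 0))
       = (\<Prod>i\<in>UNIV - {j}. 1 - t * c $ i) * det U"
proof -
  define d where "d i = (if i = j then 1 else 1 - t * c $ i)" for i
  define V :: "real^'m^'m" where "V = (\<chi> i. d i *s U $ i)"
  have row_V: "row i V = d i *\<^sub>R U $ i" for i
    by (simp add: V_def row_def vec_eq_iff)
  have det_V: "det V = (\<Prod>i\<in>UNIV - {j}. 1 - t * c $ i) * det U"
  proof -
    have "(\<Prod>i\<in>UNIV. d i) = (\<Prod>i\<in>UNIV - {j}. 1 - t * c $ i)"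
      by (simp add: d_def prod.remove[of UNIV j])
    then show ?thesis
      unfolding V_def det_rows_mul by simp
  qed
  define x where "x = (\<Sum>i\<in>UNIV - {j}. (t * c $ i / d i) *\<^sub>R row i V)"
  have x: "x = (\<Sum>i\<in>UNIV - {j}. (t * c $ i) *\<^sub>R U $ i)"
    unfolding x_def row_V using nz by (intro sum.cong) (auto simp: d_def)
  have x_span: "x \<in> vec.span {row k V |k. k \<noteq> j}"
    unfolding x_def scalar_mult_eq_scaleR[symmetric]
    by (intro vec.span_sum vec.span_scale vec.span_base) blast
  have "(1 - t * c $ j) *\<^sub>R U $ j + t *\<^sub>R (transpose U *v c) = U $ j + x"
  proof -
    have "t *\<^sub>R (transpose U *v c) = (t * c $ j) *\<^sub>R U $ j + (\<Sum>i\<in>UNIV - {j}. (t * c $ i) *\<^sub>R U $ i)"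
      unfolding transpose_mult_vec_eq_sum scaleR_sum_right by (simp add: sum.remove[of UNIV j])
    then show ?thesis
      unfolding x by (simp add: algebra_simps)
  qed
  then have "(\<chi> i. (1 - t * c $ i) *\<^sub>R U $ i + (if i = j then t *\<^sub>R (transpose U *v c) else 0))
      = (\<chi> k. if k = j then row j V + x else row k V)"
    by (simp add: vec_eq_iff row_V d_def)
  then show ?thesis
    using det_row_span[OF x_span] det_V by simp
qed

lemma eventually_prod_one_minus_gt_one:
  fixes c :: "'a \<Rightarrow> real"
  assumes "(\<Sum>i\<in>A. c i) < 0"
  shows "\<forall>\<^sub>F t in at_right 0. 1 < (\<Prod>i\<in>A. 1 - t * c i)"
proof -
  have "((\<lambda>t. \<Prod>i\<in>A. 1 - t * c i) has_field_derivative
      (\<Sum>i\<in>A. (- c i) * (\<Prod>y\<in>A - {i}. 1 - 0 * c y))) (at 0)"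
    by (rule has_field_derivative_prod) (auto intro!: derivative_eq_intros)
  then have "((\<lambda>t. \<Prod>i\<in>A. 1 - t * c i) has_real_derivative - (\<Sum>i\<in>A. c i)) (at 0)"
    by (simp add: sum_negf)
  from DERIV_pos_inc_right[OF this] assms show ?thesis
    unfolding eventually_at_right_field by force
qed

lemma eventually_one_minus_pos: "\<forall>\<^sub>F t in at_right 0. \<forall>i. 0 < 1 - t * (c :: real^'m::finite) $ i"
proof (intro eventually_all_finite order_tendstoD(1))
  show "((\<lambda>t. 1 - t * c $ i) \<longlongrightarrow> 1) (at_right 0)" for i
    by (auto intro!: tendsto_eq_intros)
qed simp

text \<open>Shrinking every row \<open>U\<^sub>i\<close> to \<open>(1 - t c\<^sub>i) U\<^sub>i\<close> and adding \<open>t w\<close> to row \<open>j\<close> gives another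
  decomposition of \<open>z\<close>, with determinant multiplied by \<open>\<Prod>i\<noteq>j. 1 - t c\<^sub>i\<close>; its derivative at
  \<open>t = 0\<close> is \<open>-\<Sum>i\<noteq>j. c\<^sub>i\<close>.\<close>

lemma max_det_cone_decomposition_coords:
  fixes K :: "(real^'m::finite) set"
  assumes "convex_cone K" "U \<in> cone_decompositions K z" "det U \<noteq> 0"
    and max: "\<And>V. V \<in> cone_decompositions K z \<Longrightarrow> \<bar>det V\<bar> \<le> \<bar>det U\<bar>"
    and w: "transpose U *v c \<in> K"
  shows "0 \<le> (\<Sum>i\<in>UNIV - {j}. c $ i)"
proof (rule ccontr)
  assume "\<not> ?thesis"
  then have "\<forall>\<^sub>F t in at_right 0. 1 < (\<Prod>i\<in>UNIV - {j}. 1 - t * c $ i)"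
    using eventually_prod_one_minus_gt_one[of "\<lambda>i. c $ i" "UNIV - {j}"] by simp
  then have "\<forall>\<^sub>F t in at_right 0. 0 < t \<and> (\<forall>i. 0 < 1 - t * c $ i) \<and> 1 < (\<Prod>i\<in>UNIV - {j}. 1 - t * c $ i)"
    using eventually_at_right_less eventually_one_minus_pos by (intro eventually_conj)
  then obtain t where t: "0 < t" and pos: "\<And>i. 0 < 1 - t * c $ i"
    and grow: "1 < (\<Prod>i\<in>UNIV - {j}. 1 - t * c $ i)"
    using eventually_happens'[OF trivial_limit_at_right_real] by blast
  define w where "w = transpose U *v c"
  have w_sum: "w = (\<Sum>i\<in>UNIV. c $ i *\<^sub>R U $ i)"
    unfolding w_def by (rule transpose_mult_vec_eq_sum)
  define V where "V = (\<chi> i. (1 - t * c $ i) *\<^sub>R U $ i + (if i = j then t *\<^sub>R w else 0))"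
  have "V $ i \<in> K" for i
    using assms(2) pos t w unfolding V_def w_def cone_decompositions_def
    by (auto intro!: convex_cone_add[OF assms(1)] convex_cone_scaleR[OF assms(1)] less_imp_le
        convex_cone_contains_0[OF assms(1)])
  moreover have "(\<Sum>i\<in>UNIV. V $ i) = z"
  proof -
    have "(\<Sum>i\<in>UNIV. V $ i) = (\<Sum>i\<in>UNIV. U $ i) - t *\<^sub>R (\<Sum>i\<in>UNIV. c $ i *\<^sub>R U $ i) + t *\<^sub>R w"
      by (simp add: V_def sum.distrib scaleR_sum_right algebra_simps sum_subtractf)
    then show ?thesis
      using assms(2) w_sum by (simp add: cone_decompositions_def)
  qed
  ultimately have "\<bar>det V\<bar> \<le> \<bar>det U\<bar>"
    by (intro max) (simp add: cone_decompositions_def)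
  moreover have "det V = (\<Prod>i\<in>UNIV - {j}. 1 - t * c $ i) * det U"
    unfolding V_def w_def using pos by (intro det_rescale_rows_add_combination) (metis less_irrefl)
  ultimately have "(\<Prod>i\<in>UNIV - {j}. 1 - t * c $ i) * \<bar>det U\<bar> \<le> 1 * \<bar>det U\<bar>"
    using grow by (simp add: abs_mult)
  then show False
    using grow assms(3) by (simp add: mult_le_cancel_right_pos)
qed

lemma pointed_cone_simplicial_sandwich:
  fixes K :: "(real^'m::finite) set"
  assumes "closed K" "convex_cone K" "\<And>w. w \<in> K \<Longrightarrow> - w \<in> K \<Longrightarrow> w = 0"
    and "ball z \<eta> \<subseteq> K" "0 < \<eta>" "z \<noteq> 0"
  obtains P :: "real^'m^'m" where "invertible P" "P *v z = (\<chi> i. 1)"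
    "\<And>w. (\<And>i. 0 \<le> (P *v w) $ i) \<Longrightarrow> w \<in> K"
    "\<And>w j. w \<in> K \<Longrightarrow> 0 \<le> (\<Sum>i\<in>UNIV - {j}. (P *v w) $ i)"
proof -
  obtain U where U: "U \<in> cone_decompositions K z" "det U \<noteq> 0"
      "\<And>V. V \<in> cone_decompositions K z \<Longrightarrow> \<bar>det V\<bar> \<le> \<bar>det U\<bar>"
    using cone_decomposition_max_det[OF assms] by blast
  define T where "T = transpose U"
  have T_sum: "T *v a = (\<Sum>i\<in>UNIV. a $ i *\<^sub>R U $ i)" for a
    unfolding T_def by (rule transpose_mult_vec_eq_sum)
  have "invertible T"
    using U(2) by (simp add: T_def invertible_det_nz)
  then obtain P where P: "P ** T = mat 1" "T ** P = mat 1"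
    unfolding invertible_def by blast
  have coords: "T *v (P *v w) = w" "P *v (T *v a) = a" for w a
    by (simp_all add: matrix_vector_mul_assoc P)
  have rows: "U $ i \<in> K" for i
    using U(1) by (simp add: cone_decompositions_def)
  show ?thesis
  proof
    show "invertible P"
      using P unfolding invertible_def by blast
    have "T *v (\<chi> i. 1) = z"
      using U(1) by (simp add: T_sum cone_decompositions_def)
    then show "P *v z = (\<chi> i. 1)"
      using coords(2) by metis
  next
    fix w
    assume "\<And>i. 0 \<le> (P *v w) $ i"
    then have "(\<Sum>i\<in>UNIV. (P *v w) $ i *\<^sub>R U $ i) \<in> K"
      using rows by (intro convex_cone_sum[OF assms(2)] convex_cone_scaleR[OF assms(2)])
    then show "w \<in> K"
      using coords(1)[of w] by (simp add: T_sum)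
  next
    fix w j
    assume "w \<in> K"
    then have "transpose U *v (P *v w) \<in> K"
      using coords(1)[of w] by (simp only: T_def)
    then show "0 \<le> (\<Sum>i\<in>UNIV - {j}. (P *v w) $ i)"
      using max_det_cone_decomposition_coords[OF assms(2) U] by blast
  qed
qed

section \<open>A uniform squeezing radius for proper convex domains\<close>

text \<open>In coordinates \<open>c\<close> with \<open>L = \<Sum>c\<close>, the projective map of \<open>simplex_chart m R\<close> sends \<open>c\<close> to the
  point with entries \<open>(c\<^sub>j / L - 1 / m) / R\<close>: the barycentre of the standard simplex goes to \<open>0\<close>.\<close>

definition simplex_chart :: "real \<Rightarrow> real \<Rightarrow> real^('n::finite option)^('n option)" where
  "simplex_chart m R =
    (\<chi> k i. case k of None \<Rightarrow> 1 | Some j \<Rightarrow> ((if i = Some j then 1 else 0) - 1 / m) / R)"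

lemma simplex_chart_mult_None: "(simplex_chart m R *v c) $ None = (\<Sum>i\<in>UNIV. c $ i)"
  by (simp add: simplex_chart_def matrix_vector_mult_def)

lemma simplex_chart_mult_Some:
  "(simplex_chart m R *v c) $ Some j = (c $ Some j - (\<Sum>i\<in>UNIV. c $ i) / m) / R"
proof -
  have "(simplex_chart m R *v c) $ Some j = (\<Sum>i\<in>UNIV. ((if i = Some j then 1 else 0) - 1 / m) / R * c $ i)"
    by (simp add: simplex_chart_def matrix_vector_mult_def)
  also have "\<dots> = (\<Sum>i\<in>UNIV. (if i = Some j then c $ i else 0) / R - (c $ i / m) / R)"
    by (intro sum.cong refl) (simp add: diff_divide_distrib left_diff_distrib)
  also have "\<dots> = (c $ Some j - (\<Sum>i\<in>UNIV. c $ i) / m) / R"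
    by (simp add: sum_subtractf sum_divide_distrib[symmetric] diff_divide_distrib)
  finally show ?thesis .
qed

lemma invertible_simplex_chart:
  assumes "R \<noteq> 0"
  shows "invertible (simplex_chart m R :: real^('n::finite option)^('n option))"
  unfolding invertible_left_inverse matrix_left_invertible_ker
proof (intro allI impI)
  fix c :: "real^('n option)"
  assume c: "simplex_chart m R *v c = 0"
  then have sum: "(\<Sum>i\<in>UNIV. c $ i) = 0"
    using simplex_chart_mult_None[of m R c] by simp
  have "c $ Some j = 0" for j
    using c simplex_chart_mult_Some[of m R c j] sum assms by simp
  moreover have "c $ None = 0"
    using sum calculation by (simp add: sum_UNIV_option)
  ultimately show "c = 0"
    by (simp add: vec_option_eq_iff vec_eq_iff)
qed

lemma proj_apply_simplex_chart_mult:
  assumes "(\<Sum>i\<in>UNIV. (P *v hom_lift x) $ i) \<noteq> 0" "R \<noteq> 0"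
  shows "proj_apply (simplex_chart m R ** P) x $ j
       = ((P *v hom_lift x) $ Some j / (\<Sum>i\<in>UNIV. (P *v hom_lift x) $ i) - 1 / m) / R"
  using assms
  by (simp add: proj_apply_def Let_def matrix_vector_mul_assoc[symmetric] simplex_chart_mult_None
      simplex_chart_mult_Some field_simps)

lemma barycentric_coord_bound:
  fixes c :: "real^'m::finite"
  assumes "0 < (\<Sum>i\<in>UNIV. c $ i)" "\<And>j. 0 \<le> (\<Sum>i\<in>UNIV - {j}. c $ i)"
  shows "\<bar>c $ j / (\<Sum>i\<in>UNIV. c $ i)\<bar> \<le> real CARD('m)"
proof -
  define L where "L = (\<Sum>i\<in>UNIV. c $ i)"
  have split: "L = c $ k + (\<Sum>i\<in>UNIV - {k}. c $ i)" for k
    by (simp add: L_def sum.remove[of UNIV k])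
  have upper: "c $ k \<le> L" for k
    using split[of k] assms(2)[of k] by linarith
  have "(\<Sum>i\<in>UNIV - {j}. c $ i) \<le> (\<Sum>i\<in>UNIV - {j}. L)"
    using upper by (intro sum_mono)
  also have "\<dots> \<le> real CARD('m) * L"
    using assms(1) by (simp add: L_def card_Diff_singleton mult_right_mono)
  finally have "(\<Sum>i\<in>UNIV - {j}. c $ i) \<le> real CARD('m) * L" .
  moreover have "0 < L" "L \<le> real CARD('m) * L"
    using assms(1) by (simp_all add: L_def)
  ultimately have "\<bar>c $ j\<bar> \<le> real CARD('m) * L"
    using split[of j] upper[of j] unfolding abs_le_iff by linarith
  then show ?thesis
    using assms(1) by (simp add: L_def abs_divide pos_divide_le_eq)
qed

lemma card_option_ge_2: "2 \<le> real CARD('n::finite option)"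
  by (simp add: Suc_leI)

lemma norm_proj_apply_simplex_chart_less_1:
  fixes P :: "real^('n::finite option)^('n option)"
  defines "m \<equiv> real CARD('n option)"
  assumes "0 < (\<Sum>i\<in>UNIV. (P *v hom_lift x) $ i)"
    "\<And>j. 0 \<le> (\<Sum>i\<in>UNIV - {j}. (P *v hom_lift x) $ i)"
  shows "norm (proj_apply (simplex_chart m (m\<^sup>2 + 1) ** P) x) < 1"
proof -
  define c where "c = P *v hom_lift x"
  define L where "L = (\<Sum>i\<in>UNIV. c $ i)"
  have m: "2 \<le> m"
    unfolding m_def by (rule card_option_ge_2)
  have R: "0 < m\<^sup>2 + 1"
    using zero_le_power2[of m] by linarith
  have coord: "\<bar>proj_apply (simplex_chart m (m\<^sup>2 + 1) ** P) x $ j\<bar> \<le> (m + 1) / (m\<^sup>2 + 1)" for j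
  proof -
    have "\<bar>c $ Some j / L\<bar> \<le> m"
      using barycentric_coord_bound[of c] assms(2,3) by (simp add: c_def L_def m_def)
    moreover have "\<bar>1 / m\<bar> \<le> 1"
      using m by simp
    ultimately have "\<bar>c $ Some j / L - 1 / m\<bar> \<le> m + 1"
      by linarith
    then show ?thesis
      using proj_apply_simplex_chart_mult[of P x "m\<^sup>2 + 1" m j] assms(2) R
      by (simp add: c_def L_def abs_divide divide_right_mono)
  qed
  have "norm (proj_apply (simplex_chart m (m\<^sup>2 + 1) ** P) x)
      \<le> (\<Sum>j\<in>UNIV. \<bar>proj_apply (simplex_chart m (m\<^sup>2 + 1) ** P) x $ j\<bar>)"
    by (rule norm_le_l1_cart)
  also have "\<dots> \<le> (\<Sum>j\<in>(UNIV::'n set). (m + 1) / (m\<^sup>2 + 1))"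
    by (intro sum_mono coord)
  also have "\<dots> = (m - 1) * (m + 1) / (m\<^sup>2 + 1)"
    by (simp add: m_def)
  also have "\<dots> < 1"
    using R by (simp add: field_simps power2_eq_square)
  finally show ?thesis .
qed

lemma proj_apply_simplex_chart_attains:
  fixes P :: "real^('n::finite option)^('n option)"
  assumes "invertible P" and pos: "\<And>w. (\<And>i. 0 < (P *v w) $ i) \<Longrightarrow> w \<in> hom_cone D"
    and a: "\<And>i. 0 < a $ i" "(\<Sum>i\<in>UNIV. a $ i) = 1" and "R \<noteq> 0"
  shows "(\<chi> j. (a $ Some j - 1 / m) / R) \<in> proj_apply (simplex_chart m R ** P) ` D"
proof -
  obtain Q where Q: "P ** Q = mat 1"
    using assms(1) invertible_right_inverse by blast
  define w where "w = Q *v a"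
  have Pw: "P *v w = a"
    by (simp add: w_def matrix_vector_mul_assoc Q)
  then have w: "w \<in> hom_cone D"
    using pos a(1) by simp
  define x where "x = inverse (w $ None) *\<^sub>R hom_tail w"
  have "0 < w $ None" "x \<in> D"
    using w by (simp_all add: hom_cone_def x_def)
  have "w = w $ None *\<^sub>R hom_lift x"
    unfolding x_def by (rule hom_cone_eq_scaleR_hom_lift[OF w])
  then have "inverse (w $ None) *\<^sub>R w = inverse (w $ None) *\<^sub>R (w $ None *\<^sub>R hom_lift x)"
    by (rule arg_cong)
  then have "hom_lift x = inverse (w $ None) *\<^sub>R w"
    using \<open>0 < w $ None\<close> by simp
  then have Px: "P *v hom_lift x = inverse (w $ None) *\<^sub>R a"
    by (simp add: matrix_vector_mult_scaleR Pw)
  have "proj_apply (simplex_chart m R ** P) x = (\<chi> j. (a $ Some j - 1 / m) / R)"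
    using \<open>0 < w $ None\<close> \<open>R \<noteq> 0\<close> a(2)
    by (simp add: vec_eq_iff proj_apply_simplex_chart_mult Px sum_distrib_left[symmetric])
  from image_eqI[where f="proj_apply (simplex_chart m R ** P)", OF this[symmetric] \<open>x \<in> D\<close>]
  show ?thesis .
qed

lemma ball_subset_proj_apply_simplex_chart:
  fixes P :: "real^('n::finite option)^('n option)"
  defines "m \<equiv> real CARD('n option)"
  assumes "invertible P" and pos: "\<And>w. (\<And>i. 0 < (P *v w) $ i) \<Longrightarrow> w \<in> hom_cone D"
  shows "ball 0 (1 / (m\<^sup>2 * (m\<^sup>2 + 1))) \<subseteq> proj_apply (simplex_chart m (m\<^sup>2 + 1) ** P) ` D"
proof
  fix y :: "real^'n"
  assume y: "y \<in> ball 0 (1 / (m\<^sup>2 * (m\<^sup>2 + 1)))"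
  define R where "R = m\<^sup>2 + 1"
  have m: "2 \<le> m"
    unfolding m_def by (rule card_option_ge_2)
  have R: "0 < R"
    using zero_le_power2[of m] unfolding R_def by linarith
  have small: "\<bar>R * y $ j\<bar> < 1 / m\<^sup>2" for j
  proof -
    have "\<bar>y $ j\<bar> < 1 / (m\<^sup>2 * R)"
      using component_le_norm_cart[of y j] y by (simp add: R_def)
    then show ?thesis
      using R m by (simp add: abs_mult field_simps)
  qed
  define a :: "real^('n option)" where
    "a = (\<chi> i. case i of None \<Rightarrow> 1 - (\<Sum>j\<in>UNIV. R * y $ j + 1 / m) | Some j \<Rightarrow> R * y $ j + 1 / m)"
  have a_Some: "a $ Some j = R * y $ j + 1 / m" for j
    by (simp add: a_def)
  have "1 / m\<^sup>2 < 1 / m"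
    using m by (simp add: field_simps power2_eq_square)
  have "0 < a $ i" for i
  proof (cases i)
    case None
    have "(\<Sum>j\<in>UNIV. R * y $ j) \<le> (\<Sum>j\<in>(UNIV::'n set). \<bar>R * y $ j\<bar>)"
      by (intro sum_mono) auto
    also have "\<dots> < (\<Sum>j\<in>(UNIV::'n set). 1 / m\<^sup>2)"
      using small by (intro sum_strict_mono) auto
    also have "\<dots> = (m - 1) / m\<^sup>2"
      by (simp add: m_def)
    also have "\<dots> < 1 - (m - 1) / m"
      using m by (simp add: field_simps power2_eq_square)
    finally show ?thesis
      using None by (simp add: a_def sum.distrib m_def)
  next
    case (Some j)
    then show ?thesis
      using small[of j] \<open>1 / m\<^sup>2 < 1 / m\<close> by (simp add: a_Some)
  qed
  moreover have "(\<Sum>i\<in>UNIV. a $ i) = 1"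
    by (simp add: sum_UNIV_option a_Some a_def)
  moreover have "(\<chi> j. (a $ Some j - 1 / m) / R) = y"
    using R by (simp add: vec_eq_iff a_Some)
  ultimately show "y \<in> proj_apply (simplex_chart m (m\<^sup>2 + 1) ** P) ` D"
    using proj_apply_simplex_chart_attains[OF assms(2) pos, of a R m] R by (simp add: R_def)
qed

lemma simplicial_sandwich_sum_pos:
  fixes P :: "real^'m::finite^'m"
  assumes inner: "\<And>w. (\<And>i. 0 \<le> (P *v w) $ i) \<Longrightarrow> w \<in> K"
    and outer: "\<And>w j. w \<in> K \<Longrightarrow> 0 \<le> (\<Sum>i\<in>UNIV - {j}. (P *v w) $ i)"
    and pointed: "\<And>w. w \<in> K \<Longrightarrow> - w \<in> K \<Longrightarrow> w = 0"
    and "w \<in> K" "w \<noteq> 0"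
  shows "0 < (\<Sum>i\<in>UNIV. (P *v w) $ i)"
proof (rule ccontr)
  assume "\<not> ?thesis"
  then have "(P *v w) $ j \<le> 0" for j
    using outer[OF \<open>w \<in> K\<close>, of j] sum.remove[of UNIV j "\<lambda>i. (P *v w) $ i"] by simp
  then have "- w \<in> K"
    by (intro inner) (simp add: matrix_vector_mult_def sum_negf)
  then show False
    using pointed \<open>w \<in> K\<close> \<open>w \<noteq> 0\<close> by blast
qed

lemma open_subset_closure_convex_open:
  fixes C :: "'a::euclidean_space set"
  assumes "open C" "convex C" "open S" "S \<subseteq> closure C"
  shows "S \<subseteq> C"
  using interior_maximal[OF assms(4,3)] convex_interior_closure[OF assms(2)] interior_open[OF assms(1)]
  by simp

lemma proper_convex_simplicial_coords:
  fixes D :: "(real^'n::finite) set"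
  assumes "domain D" "proper_convex D" "z \<in> D"
  obtains P :: "real^('n option)^('n option)" where "invertible P" "P *v hom_lift z = (\<chi> i. 1)"
    "\<And>w. (\<And>i. 0 < (P *v w) $ i) \<Longrightarrow> w \<in> hom_cone D"
    "\<And>x. x \<in> D \<Longrightarrow> 0 < (\<Sum>i\<in>UNIV. (P *v hom_lift x) $ i)"
    "\<And>x j. x \<in> D \<Longrightarrow> 0 \<le> (\<Sum>i\<in>UNIV - {j}. (P *v hom_lift x) $ i)"
proof -
  have D: "open D" "convex D" "\<not> contains_line D"
    using assms(1,2) by (auto simp: domain_def proper_convex_def)
  let ?C = "hom_cone D"
  let ?K = "closure ?C"
  have cone: "convex_cone ?K"
    using convex_cone_closure_hom_cone[OF D(2) assms(3)] .
  have pointed: "w = 0" if "w \<in> ?K" "- w \<in> ?K" for w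
    using closure_hom_cone_pointed[OF D that] .
  have "hom_lift z \<in> ?C"
    using scaleR_hom_lift_in_hom_cone[OF assms(3), of 1] by simp
  then obtain \<eta> where \<eta>: "0 < \<eta>" "ball (hom_lift z) \<eta> \<subseteq> ?C"
    using open_hom_cone[OF D(1)] open_contains_ball by blast
  then have "ball (hom_lift z) \<eta> \<subseteq> ?K"
    using closure_subset by blast
  then obtain P :: "real^('n option)^('n option)" where P: "invertible P" "P *v hom_lift z = (\<chi> i. 1)"
      "\<And>w. (\<And>i. 0 \<le> (P *v w) $ i) \<Longrightarrow> w \<in> ?K"
      "\<And>w j. w \<in> ?K \<Longrightarrow> 0 \<le> (\<Sum>i\<in>UNIV - {j}. (P *v w) $ i)"
    using pointed_cone_simplicial_sandwich[OF closed_closure cone pointed _ \<eta>(1) hom_lift_neq_zero]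
    by blast
  have "(\<Inter>i. {w. 0 < (P *v w) $ i}) \<subseteq> ?C"
  proof (rule open_subset_closure_convex_open[OF open_hom_cone[OF D(1)] convex_hom_cone[OF D(2)]])
    show "open (\<Inter>i. {w. 0 < (P *v w) $ i})"
      by (intro open_INT finite open_Collect_less ballI continuous_on_component
          linear_continuous_on bounded_linear_intros matrix_vector_mult_linear_continuous_on)
    show "(\<Inter>i. {w. 0 < (P *v w) $ i}) \<subseteq> ?K"
      using P(3) by (auto intro: less_imp_le)
  qed
  moreover have lift_in_K: "hom_lift x \<in> ?K" if "x \<in> D" for x
    using scaleR_hom_lift_in_hom_cone[OF that, of 1] closure_subset by auto
  ultimately show ?thesis
    using that[OF P(1,2)] P(4) simplicial_sandwich_sum_pos[OF P(3,4) pointed _ hom_lift_neq_zero]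
    by blast
qed

lemma squeeze_radius_of_simplicial_coords:
  fixes D :: "(real^'n::finite) set" and P :: "real^('n option)^('n option)"
  defines "m \<equiv> real CARD('n option)"
  assumes "invertible P" "P *v hom_lift z = (\<chi> i. 1)"
    and pos: "\<And>w. (\<And>i. 0 < (P *v w) $ i) \<Longrightarrow> w \<in> hom_cone D"
    and den: "\<And>x. x \<in> D \<Longrightarrow> 0 < (\<Sum>i\<in>UNIV. (P *v hom_lift x) $ i)"
    and outer: "\<And>x j. x \<in> D \<Longrightarrow> 0 \<le> (\<Sum>i\<in>UNIV - {j}. (P *v hom_lift x) $ i)"
  shows "1 / (m\<^sup>2 * (m\<^sup>2 + 1)) \<in> squeeze_radii D z"
proof -
  define R where "R = m\<^sup>2 + 1"
  have m: "2 \<le> m"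
    unfolding m_def by (rule card_option_ge_2)
  have R: "0 < R"
    using zero_le_power2[of m] unfolding R_def by linarith
  define M where "M = simplex_chart m R ** P"
  have "invertible M"
    unfolding M_def using R assms(2) by (intro invertible_mult invertible_simplex_chart) auto
  moreover have "\<forall>x\<in>D. proj_finite_at M x"
    using den
    by (force simp: proj_finite_at_def M_def matrix_vector_mul_assoc[symmetric] simplex_chart_mult_None)
  moreover have "proj_apply M z = 0"
    using proj_apply_simplex_chart_mult[of P z R m] R m assms(3) by (simp add: M_def vec_eq_iff m_def)
  moreover have "proj_apply M ` D \<subseteq> ball 0 1"
    using norm_proj_apply_simplex_chart_less_1[of P] den outer by (auto simp: M_def R_def m_def)
  moreover have "ball 0 (1 / (m\<^sup>2 * R)) \<subseteq> proj_apply M ` D"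
    using ball_subset_proj_apply_simplex_chart[OF assms(2) pos] by (simp add: M_def R_def m_def)
  moreover have "0 < 1 / (m\<^sup>2 * R)"
    using m R by simp
  ultimately show ?thesis
    unfolding squeeze_radii_def R_def by blast
qed

lemma squeeze_radius_proper_convex:
  fixes D :: "(real^'n::finite) set"
  defines "m \<equiv> real CARD('n option)"
  assumes "domain D" "proper_convex D" "z \<in> D"
  shows "1 / (m\<^sup>2 * (m\<^sup>2 + 1)) \<in> squeeze_radii D z"
proof -
  obtain P :: "real^('n option)^('n option)" where "invertible P" "P *v hom_lift z = (\<chi> i. 1)"
    "\<And>w. (\<And>i. 0 < (P *v w) $ i) \<Longrightarrow> w \<in> hom_cone D"
    "\<And>x. x \<in> D \<Longrightarrow> 0 < (\<Sum>i\<in>UNIV. (P *v hom_lift x) $ i)"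
    "\<And>x j. x \<in> D \<Longrightarrow> 0 \<le> (\<Sum>i\<in>UNIV - {j}. (P *v hom_lift x) $ i)"
    using proper_convex_simplicial_coords[OF assms(2-4)] by blast
  then show ?thesis
    unfolding m_def by (rule squeeze_radius_of_simplicial_coords)
qed

theorem theorem1:
  shows "(\<exists>r>0. \<forall>(D :: (real^'n::finite) set) z.
            domain D \<and> proper_convex D \<and> z \<in> D \<longrightarrow> squeezing D z \<ge> r)
       \<and> (\<forall>D :: (real^'n) set.
            domain D \<and> (INF z\<in>D. squeezing D z) > 0 \<longrightarrow> proper_convex D)"
proof
  define m where "m = real CARD('n option)"
  have "0 < 1 / (m\<^sup>2 * (m\<^sup>2 + 1))"
    using card_option_ge_2[where 'n='n] by (simp add: m_def add_pos_nonneg)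
  moreover have "1 / (m\<^sup>2 * (m\<^sup>2 + 1)) \<le> squeezing D z"
    if "domain D" "proper_convex D" "z \<in> D" for D :: "(real^'n) set" and z
    using squeezing_ge[OF squeeze_radius_proper_convex[OF that]] by (simp add: m_def)
  ultimately show "\<exists>r>0. \<forall>(D :: (real^'n) set) z.
      domain D \<and> proper_convex D \<and> z \<in> D \<longrightarrow> squeezing D z \<ge> r"
    by blast
next
  show "\<forall>D :: (real^'n) set. domain D \<and> (INF z\<in>D. squeezing D z) > 0 \<longrightarrow> proper_convex D"
    using proper_convex_if_squeezing_bounded_below by blast
qed

end
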